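(* Let $(X,\mathrm{dist})$ be a metric space, $\Sigma$ a metric space, and $\{U_\sigma(t,\tau)\}_{\sigma\in\Sigma}$ a family of processes on $X$. If $K_1,K_2\subset X$ are compact uniformly attracting sets for the family, then $K_1\cap K_2$ is a compact uniformly attracting set for the family.
   Context: A process on $X$ is a family of maps $U(t,\tau):X\to X$, indexed by reals $t\ge\tau$, with $U(\tau,\tau)=\mathrm{id}_X$ and $U(t,\tau)=U(t,s)U(s,\tau)$ for $t\ge s\ge\tau$; no continuity is assumed. For nonempty $B,C\subset X$, $\delta_X(B,C)=\sup_{x\in B}\inf_{\xi\in C}\mathrm{dist}(x,\xi)$. A set $K\subset X$ is uniformly attracting if for every bounded $C\subset X$, $\lim_{t-\tau\to\infty}\sup_{\sigma\in\Sigma}\delta_X(U_\sigma(t,\tau)C,K)=0$. *)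

theory Defs
  imports "HOL-Analysis.Analysis"
begin

definition process :: "(real \<Rightarrow> real \<Rightarrow> 'a \<Rightarrow> 'a) \<Rightarrow> bool" where
  "process U \<longleftrightarrow> (\<forall>\<tau>. U \<tau> \<tau> = id) \<and>
     (\<forall>t s \<tau>. \<tau> \<le> s \<and> s \<le> t \<longrightarrow> U t \<tau> = U t s \<circ> U s \<tau>)"

text \<open>For nonempty C, infdist x C is exactly
  the infimum of dist x xi over xi in C.\<close>
definition hsemidist :: "'a::metric_space set \<Rightarrow> 'a set \<Rightarrow> ereal" where
  "hsemidist B C = (SUP x\<in>B. ereal (infdist x C))"

text \<open>K is uniformly attracting for the family U (indexed by all sigma of type 's):
  K nonempty (needed for delta to be defined) and for every nonempty bounded C,
  sup over sigma of delta(U sigma t tau C, K) tends to 0 as t - tau tends to infinity.\<close>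
definition unif_attracting :: "('s \<Rightarrow> real \<Rightarrow> real \<Rightarrow> 'a::metric_space \<Rightarrow> 'a) \<Rightarrow> 'a set \<Rightarrow> bool" where
  "unif_attracting U K \<longleftrightarrow> K \<noteq> {} \<and>
     (\<forall>C. bounded C \<and> C \<noteq> {} \<longrightarrow>
        (\<forall>\<epsilon>>0. \<exists>T. \<forall>t \<tau>. \<tau> \<le> t \<and> t - \<tau> \<ge> T \<longrightarrow>
            (SUP \<sigma>. hsemidist (U \<sigma> t \<tau> ` C) K) \<le> ereal \<epsilon>))"

end

theory Submission
  imports Defs
begin

text \<open>A point within \<open>d\<close> of both \<open>K\<^sub>1\<close> and \<open>K\<^sub>2\<close> is near points \<open>a \<in> K\<^sub>1\<close>, \<open>b \<in> K\<^sub>2\<close> with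
  \<open>dist a b < 2d\<close>. By compactness, the part of \<open>K\<^sub>1\<close> staying \<open>\<epsilon>\<close>-away from \<open>K\<^sub>1 \<inter> K\<^sub>2\<close> has positive
  distance from the closed set \<open>K\<^sub>2\<close>, so for small \<open>d\<close> the point \<open>a\<close>, and hence the original
  point, is within \<open>2\<epsilon>\<close> of \<open>K\<^sub>1 \<inter> K\<^sub>2\<close>. Uniform attraction to both sets therefore gives
  uniform attraction to the intersection; its nonemptiness, which the definition demands,
  follows by applying the attraction to a single point.\<close>

lemma compact_closed_near_Int:
  fixes K1 K2 :: "'a::metric_space set"
  assumes "compact K1" "closed K2" "e > 0"
  shows "\<exists>d>0. \<forall>a\<in>K1. \<forall>b\<in>K2. dist a b < d \<longrightarrow> (\<exists>z\<in>K1 \<inter> K2. dist a z < e)"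
proof -
  define F where "F = K1 - (\<Union>z\<in>K1 \<inter> K2. ball z e)"
  have "compact F"
    unfolding F_def using assms(1) by (intro compact_diff open_UN ballI open_ball)
  moreover have "F \<inter> K2 = {}"
    using assms(3) by (force simp: F_def)
  ultimately have "\<forall>\<^sub>F d in at_right 0. setdist_gt d F K2"
    using assms(2) compact_closed_imp_eventually_setdist_gt_at_right_0 by blast
  then obtain d where "d > 0" "setdist_gt d F K2"
    by (metis eventually_at_right_field field_lbound_gt_zero zero_less_one)
  have "\<exists>z\<in>K1 \<inter> K2. dist a z < e" if "a \<in> K1" "b \<in> K2" "dist a b < d" for a b
  proof (rule ccontr)
    assume "\<not> ?thesis"
    then have "a \<in> F" using that(1) by (auto simp: F_def dist_commute)
    with \<open>setdist_gt d F K2\<close> have "d < dist a b" using that(2) by (simp add: setdist_gt_def)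
    with that(3) show False by simp
  qed
  then show ?thesis using \<open>d > 0\<close> by blast
qed

lemma infdist_lessD:
  assumes "A \<noteq> {}" "infdist x A < d"
  shows "\<exists>a\<in>A. dist x a < d"
  using assms by (simp add: infdist_notempty cINF_less_iff)

lemma infdist_near_both_imp_near_Int:
  fixes K1 K2 :: "'a::metric_space set"
  assumes "compact K1" "closed K2" "K1 \<noteq> {}" "K2 \<noteq> {}" "e > 0"
  shows "\<exists>d>0. \<forall>y. infdist y K1 < d \<and> infdist y K2 < d \<longrightarrow> (\<exists>z\<in>K1 \<inter> K2. dist y z < e)"
proof -
  obtain d where d: "d > 0"
    and near: "\<And>a b. a \<in> K1 \<Longrightarrow> b \<in> K2 \<Longrightarrow> dist a b < d \<Longrightarrow> \<exists>z\<in>K1 \<inter> K2. dist a z < e / 2"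
    using compact_closed_near_Int[OF assms(1,2), of "e / 2"] assms(5) by auto
  define d' where "d' = min d e / 2"
  have "\<exists>z\<in>K1 \<inter> K2. dist y z < e" if y1: "infdist y K1 < d'" and y2: "infdist y K2 < d'" for y
  proof -
    obtain a where a: "a \<in> K1" "dist y a < d'" using infdist_lessD[OF assms(3) y1] by blast
    obtain b where b: "b \<in> K2" "dist y b < d'" using infdist_lessD[OF assms(4) y2] by blast
    have "dist a b < d"
      using dist_triangle3[of a b y] a(2) b(2) by (simp add: d'_def)
    then obtain z where z: "z \<in> K1 \<inter> K2" "dist a z < e / 2" using near a(1) b(1) by blast
    have "dist y z < e"
      using dist_triangle[of y z a] a(2) z(2) by (simp add: d'_def)
    with z(1) show ?thesis by blast
  qed
  moreover have "d' > 0" using d assms(5) by (simp add: d'_def)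
  ultimately show ?thesis by blast
qed

lemma hsemidist_le_iff: "hsemidist B K \<le> ereal e \<longleftrightarrow> (\<forall>x\<in>B. infdist x K \<le> e)"
  by (simp add: hsemidist_def SUP_le_iff)

lemma unif_attracting_iff:
  "unif_attracting U K \<longleftrightarrow> K \<noteq> {} \<and>
     (\<forall>C. bounded C \<and> C \<noteq> {} \<longrightarrow> (\<forall>e>0. \<exists>T. \<forall>t \<tau>. \<tau> \<le> t \<and> T \<le> t - \<tau> \<longrightarrow>
        (\<forall>\<sigma>. \<forall>x\<in>C. infdist (U \<sigma> t \<tau> x) K \<le> e)))"
  by (simp add: unif_attracting_def SUP_le_iff hsemidist_le_iff)

lemma unif_attractingD:
  assumes "unif_attracting U K" "bounded C" "C \<noteq> {}" "e > 0"
  obtains T where "\<And>t \<tau> \<sigma> x. \<tau> \<le> t \<Longrightarrow> T \<le> t - \<tau> \<Longrightarrow> x \<in> C \<Longrightarrow> infdist (U \<sigma> t \<tau> x) K \<le> e"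
  using assms unfolding unif_attracting_iff by meson

lemma unif_attracting_Int:
  fixes K1 K2 :: "'a::metric_space set"
  assumes "compact K1" "closed K2" "unif_attracting U K1" "unif_attracting U K2"
  shows "unif_attracting U (K1 \<inter> K2)"
proof -
  have ne: "K1 \<noteq> {}" "K2 \<noteq> {}" using assms(3,4) by (auto simp: unif_attracting_def)
  have near_Int: "\<exists>T. \<forall>t \<tau>. \<tau> \<le> t \<and> T \<le> t - \<tau> \<longrightarrow>
      (\<forall>\<sigma>. \<forall>x\<in>C. \<exists>z\<in>K1 \<inter> K2. dist (U \<sigma> t \<tau> x) z < e)"
    if C: "bounded C" "C \<noteq> {}" and "e > 0" for C e
  proof -
    obtain d where "d > 0"
      and d: "\<And>y. infdist y K1 < d \<Longrightarrow> infdist y K2 < d \<Longrightarrow> \<exists>z\<in>K1 \<inter> K2. dist y z < e"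
      using infdist_near_both_imp_near_Int[OF assms(1,2) ne \<open>e > 0\<close>] by blast
    have "d / 2 > 0" using \<open>d > 0\<close> by simp
    obtain T1 where T1: "\<And>t \<tau> \<sigma> x. \<tau> \<le> t \<Longrightarrow> T1 \<le> t - \<tau> \<Longrightarrow> x \<in> C \<Longrightarrow> infdist (U \<sigma> t \<tau> x) K1 \<le> d / 2"
      using unif_attractingD[OF assms(3) C \<open>d / 2 > 0\<close>] by blast
    obtain T2 where T2: "\<And>t \<tau> \<sigma> x. \<tau> \<le> t \<Longrightarrow> T2 \<le> t - \<tau> \<Longrightarrow> x \<in> C \<Longrightarrow> infdist (U \<sigma> t \<tau> x) K2 \<le> d / 2"
      using unif_attractingD[OF assms(4) C \<open>d / 2 > 0\<close>] by blast
    have "\<exists>z\<in>K1 \<inter> K2. dist (U \<sigma> t \<tau> x) z < e"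
      if "\<tau> \<le> t" "max T1 T2 \<le> t - \<tau>" "x \<in> C" for t \<tau> \<sigma> x
    proof (rule d)
      have "infdist (U \<sigma> t \<tau> x) K1 \<le> d / 2" using T1 that by simp
      then show "infdist (U \<sigma> t \<tau> x) K1 < d" using \<open>d > 0\<close> by linarith
      have "infdist (U \<sigma> t \<tau> x) K2 \<le> d / 2" using T2 that by simp
      then show "infdist (U \<sigma> t \<tau> x) K2 < d" using \<open>d > 0\<close> by linarith
    qed
    then show ?thesis by blast
  qed
  have "K1 \<inter> K2 \<noteq> {}"
  proof -
    obtain T where "\<forall>t \<tau>. \<tau> \<le> t \<and> T \<le> t - \<tau> \<longrightarrow>
        (\<forall>\<sigma>. \<forall>x\<in>{undefined}. \<exists>z\<in>K1 \<inter> K2. dist (U \<sigma> t \<tau> x) z < 1)"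
      using near_Int[of "{undefined}" 1] by auto
    then have "\<exists>z\<in>K1 \<inter> K2. dist (U undefined \<bar>T\<bar> 0 undefined) z < 1" by simp
    then show ?thesis by blast
  qed
  moreover have "\<exists>T. \<forall>t \<tau>. \<tau> \<le> t \<and> T \<le> t - \<tau> \<longrightarrow>
      (\<forall>\<sigma>. \<forall>x\<in>C. infdist (U \<sigma> t \<tau> x) (K1 \<inter> K2) \<le> e)"
    if "bounded C" "C \<noteq> {}" "e > 0" for C e
    using near_Int[OF that] by (meson infdist_le2 less_imp_le)
  ultimately show ?thesis unfolding unif_attracting_iff by blast
qed

theorem corollary2p8:
  fixes U :: "'s::metric_space \<Rightarrow> real \<Rightarrow> real \<Rightarrow> 'a::metric_space \<Rightarrow> 'a"
    and K1 K2 :: "'a set"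
  assumes "\<And>\<sigma>. process (U \<sigma>)"
    and "compact K1" and "unif_attracting U K1"
    and "compact K2" and "unif_attracting U K2"
  shows "compact (K1 \<inter> K2) \<and> unif_attracting U (K1 \<inter> K2)"
  using assms(2-5) by (simp add: compact_Int compact_imp_closed unif_attracting_Int)

end
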